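(* Let $\mathcal{M}=\langle\mathbf{U},\mathbf{V},\mathcal{F},P(\mathbf{U})\rangle$ and $\mathcal{M}'=\langle\mathbf{U}',\mathbf{V},\mathcal{F}',P(\mathbf{U}')\rangle$ be two SCMs over the same endogenous variables $\mathbf{V}$ and with the same functional counterfactual set $\mathbf{F}$. Then $P^{\mathcal{M}}(\mathbf{F}=\mathbf{f})=P^{\mathcal{M}'}(\mathbf{F}=\mathbf{f})$ for all $\mathbf{f}\in\mathcal{D}_{\mathbf{F}}$ if and only if $\mathcal{L}_3(\mathcal{M})=\mathcal{L}_3(\mathcal{M}')$.
   Context: An SCM $\mathcal{M}=\langle \mathbf{U},\mathbf{V},\mathcal{F},P(\mathbf{U})\rangle$ has exogenous variables $\mathbf{U}$, endogenous variables $\mathbf{V}$, functions $f_V$ mapping exogenous parents $\mathbf{U}_V$ and endogenous parents $\mathbf{Pa}_V\subseteq\mathbf{V}\setminus\{V\}$ to $V$, and a distribution $P(\mathbf{U})$; SCMs are recursive with finite discrete endogenous domains; $\mathcal{D}_{\mathbf{X}}$ is the domain of $\mathbf{X}$. $\mathbf{Y}_{\mathbf{x}}(\mathbf{u})$ is the value of $\mathbf{Y}$ under $\mathbf{u}$ in the submodel with the functions of $\mathbf{X}$ replaced by constants $\mathbf{x}$; $P^{\mathcal{M}}(\mathbf{y}_{1[\mathbf{x}_1]},\mathbf{y}_{2[\mathbf{x}_2]},\dots)=\int\mathbf{1}[\mathbf{Y}_{1[\mathbf{x}_1]}(\mathbf{u})=\mathbf{y}_1,\mathbf{Y}_{2[\mathbf{x}_2]}(\mathbf{u})=\mathbf{y}_2,\dots]dP(\mathbf{u})$,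 and $\mathcal{L}_3(\mathcal{M})$ is the set of all such counterfactual distributions. The functional counterfactual set of $\mathcal{M}$ is $\mathbf{F}=\{V_{i[\mathbf{pa}^{(j)}_{V_i}]}:V_i\in\mathbf{V},\ \mathbf{pa}^{(j)}_{V_i}\in\mathcal{D}_{\mathbf{Pa}_{V_i}}\}$ (each variable intervened on every instantiation of its parents; if $\mathbf{Pa}_{V_i}=\emptyset$, $V_i$ itself is in $\mathbf{F}$), with instantiations $\mathbf{f}\in\mathcal{D}_{\mathbf{F}}$; $P^{\mathcal{M}}(\mathbf{F}=\mathbf{f})$ is the corresponding joint counterfactual probability. *)

theory Defs
  imports "HOL-Probability.Probability"
begin

text \<open>Each endogenous variable v has a (finite, discrete) domain D v and a parent set pa v;
  both are shared parameters (same V, same functional counterfactual set F).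
  The exogenous variables are modelled by a probability space on a type 'u;
  f_V may depend on the exogenous state u (this covers U_V \<subseteq> U) and on the parents.\<close>

record ('u, 'v, 'x) scm =
  exo :: "'u measure"
  fn  :: "'v \<Rightarrow> 'u \<Rightarrow> ('v \<Rightarrow> 'x) \<Rightarrow> 'x"

definition is_SCM :: "('v \<Rightarrow> 'x set) \<Rightarrow> ('v \<Rightarrow> 'v set) \<Rightarrow> ('u, 'v, 'x) scm \<Rightarrow> bool" where
  "is_SCM D pa S \<longleftrightarrow>
     prob_space (exo S) \<and>
     wf {(w, v). w \<in> pa v} \<comment> \<open>recursive (acyclic parent relation)\<close> \<and>
     (\<forall>v u s s'. (\<forall>w\<in>pa v. s w = s' w) \<longrightarrow> fn S v u s = fn S v u s') \<and>
     (\<forall>v u s. (\<forall>w\<in>pa v. s w \<in> D w) \<longrightarrow> fn S v u s \<in> D v) \<and>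
     (\<forall>v s. (\<forall>w\<in>pa v. s w \<in> D w) \<longrightarrow>
        (\<lambda>u. fn S v u s) \<in> measurable (exo S) (count_space UNIV))"

text \<open>Solution of the submodel M_x under exogenous state u; the intervention x is a
  partial map (dom x = X, values x).\<close>
definition sol :: "('u, 'v, 'x) scm \<Rightarrow> ('v \<rightharpoonup> 'x) \<Rightarrow> 'u \<Rightarrow> 'v \<Rightarrow> 'x" where
  "sol S x u = (THE s. \<forall>v. s v = (case x v of Some c \<Rightarrow> c | None \<Rightarrow> fn S v u s))"

text \<open>A counterfactual query y_{1[x_1]}, y_{2[x_2]}, ...: a list of pairs (x_i, y_i)
  of partial assignments (intervention x_i, observed Y_i = dom y_i with values y_i).\<close>
type_synonym ('v, 'x) cf_query = "(('v \<rightharpoonup> 'x) \<times> ('v \<rightharpoonup> 'x)) list"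

definition valid_query :: "('v \<Rightarrow> 'x set) \<Rightarrow> ('v, 'x) cf_query \<Rightarrow> bool" where
  "valid_query D q \<longleftrightarrow>
     (\<forall>(x, y) \<in> set q. (\<forall>v \<in> dom x. the (x v) \<in> D v) \<and> (\<forall>v \<in> dom y. the (y v) \<in> D v))"

definition cf_prob :: "('u, 'v, 'x) scm \<Rightarrow> ('v, 'x) cf_query \<Rightarrow> real" where
  "cf_prob S q = measure (exo S)
     {u \<in> space (exo S). \<forall>(x, y) \<in> set q. \<forall>v \<in> dom y. sol S x u v = the (y v)}"

text \<open>L_3(M): the set of all counterfactual distributions, i.e. the graph of the map
  from (valid) counterfactual queries to their probabilities.\<close>
definition L3 :: "('v \<Rightarrow> 'x set) \<Rightarrow> ('u, 'v, 'x) scm \<Rightarrow> (('v, 'x) cf_query \<times> real) set" where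
  "L3 D S = {(q, cf_prob S q) | q. valid_query D q}"

text \<open>Functional counterfactual set F: index set of the counterfactual variables
  V_[pa] for every v and every instantiation pa \<in> D_{Pa_v} (extensional functions on pa v).\<close>
definition F_index :: "('v \<Rightarrow> 'x set) \<Rightarrow> ('v \<Rightarrow> 'v set) \<Rightarrow> ('v \<times> ('v \<Rightarrow> 'x)) set" where
  "F_index D pa = {(v, p). p \<in> PiE (pa v) D}"

definition F_dom :: "('v \<Rightarrow> 'x set) \<Rightarrow> ('v \<Rightarrow> 'v set) \<Rightarrow> ('v \<times> ('v \<Rightarrow> 'x) \<Rightarrow> 'x) set" where
  "F_dom D pa = PiE (F_index D pa) (\<lambda>(v, p). D v)"

definition par_interv :: "('v \<Rightarrow> 'v set) \<Rightarrow> 'v \<Rightarrow> ('v \<Rightarrow> 'x) \<Rightarrow> ('v \<rightharpoonup> 'x)" where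
  "par_interv pa v p = (\<lambda>w. if w \<in> pa v then Some (p w) else None)"

definition F_prob :: "('v \<Rightarrow> 'x set) \<Rightarrow> ('v \<Rightarrow> 'v set) \<Rightarrow> ('u, 'v, 'x) scm
                      \<Rightarrow> ('v \<times> ('v \<Rightarrow> 'x) \<Rightarrow> 'x) \<Rightarrow> real" where
  "F_prob D pa S f = measure (exo S)
     {u \<in> space (exo S). \<forall>(v, p) \<in> F_index D pa. sol S (par_interv pa v p) u v = f (v, p)}"

end

theory Submission
  imports Defs
begin

text \<open>Every exogenous state u determines a value of the functional counterfactual set,
  the response g = F_val u with g (v, p) = f_v(u, p).  Since the model is recursive, the
  solution of any submodel M_x under u is the unique fixpoint of the structural equations
  with g in place of f, so it depends on u only through g.  Hence every counterfactual
  event is a finite disjoint union of fibres {u. F_val u = g}, whose probabilities are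
  exactly the numbers P(F = g); and conversely P(F = f) is itself the probability of the
  counterfactual query that lists all variables V_[pa] of F.\<close>

lemma wf_fixpoint_ex1:
  assumes wf: "wf r"
    and H_local: "\<And>v s t. (\<And>w. (w, v) \<in> r \<Longrightarrow> s w = t w) \<Longrightarrow> H s v = H t v"
  shows "\<exists>!s. \<forall>v. s v = H s v"
proof (rule ex_ex1I)
  have "adm_wf r H"
    unfolding adm_wf_def using H_local by blast
  then show "\<exists>s. \<forall>v. s v = H s v"
    using wfrec_fixpoint[OF wf] by metis
next
  fix s t
  assume s: "\<forall>v. s v = H s v" and t: "\<forall>v. t v = H t v"
  show "s = t"
  proof
    fix v
    show "s v = t v"
      using wf
    proof (induction v rule: wf_induct_rule)
      case (less v)
      then have "H s v = H t v" by (intro H_local) blast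
      then show ?case using s t by metis
    qed
  qed
qed

lemma is_SCM_wf: "is_SCM D pa S \<Longrightarrow> wf {(w, v). w \<in> pa v}"
  unfolding is_SCM_def by blast

lemma sol_unfold:
  assumes "is_SCM D pa S"
  shows "sol S x u v = (case x v of Some c \<Rightarrow> c | None \<Rightarrow> fn S v u (sol S x u))"
proof -
  let ?H = "\<lambda>s v. case x v of Some c \<Rightarrow> c | None \<Rightarrow> fn S v u s"
  have "\<exists>!s. \<forall>v. s v = ?H s v"
    using assms unfolding is_SCM_def
    by (intro wf_fixpoint_ex1) (auto split: option.split)
  then show ?thesis
    unfolding sol_def by (rule theI'[where P = "\<lambda>s. \<forall>v. s v = ?H s v", THEN spec])
qed

lemma sol_in_D:
  assumes S: "is_SCM D pa S" and x: "\<forall>v\<in>dom x. the (x v) \<in> D v"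
  shows "sol S x u v \<in> D v"
  using is_SCM_wf[OF S]
proof (induction v rule: wf_induct_rule)
  case (less v)
  show ?case
  proof (cases "x v")
    case None
    have "fn S v u (sol S x u) \<in> D v"
      using less S unfolding is_SCM_def by blast
    then show ?thesis using None sol_unfold[OF S, of x u v] by simp
  next
    case (Some c)
    then show ?thesis using sol_unfold[OF S, of x u v] x by (auto simp: dom_def)
  qed
qed

lemma sol_par_interv:
  assumes S: "is_SCM D pa S"
  shows "sol S (par_interv pa v p) u v = fn S v u p"
proof -
  let ?s = "sol S (par_interv pa v p) u"
  have "v \<notin> pa v"
    using wf_not_refl[OF is_SCM_wf[OF S]] by blast
  then have "?s v = fn S v u ?s"
    using sol_unfold[OF S, of "par_interv pa v p" u v] by (simp add: par_interv_def)
  moreover have "\<forall>w\<in>pa v. ?s w = p w"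
    using sol_unfold[OF S, of "par_interv pa v p" u] by (simp add: par_interv_def)
  ultimately show ?thesis
    using S unfolding is_SCM_def by metis
qed

definition F_sol :: "('v \<Rightarrow> 'v set) \<Rightarrow> ('v \<times> ('v \<Rightarrow> 'x) \<Rightarrow> 'x) \<Rightarrow> ('v \<rightharpoonup> 'x) \<Rightarrow> 'v \<Rightarrow> 'x" where
  "F_sol pa g x = (THE s. \<forall>v. s v = (case x v of Some c \<Rightarrow> c | None \<Rightarrow> g (v, restrict s (pa v))))"

lemma F_sol_eqI:
  assumes wf: "wf {(w, v). w \<in> pa v}"
    and s: "\<forall>v. s v = (case x v of Some c \<Rightarrow> c | None \<Rightarrow> g (v, restrict s (pa v)))"
  shows "F_sol pa g x = s"
proof -
  let ?P = "\<lambda>s. \<forall>v. s v = (case x v of Some c \<Rightarrow> c | None \<Rightarrow> g (v, restrict s (pa v)))"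
  have "\<exists>!s. ?P s"
    using wf by (rule wf_fixpoint_ex1) (metis case_prodI mem_Collect_eq restrict_ext)
  then show ?thesis
    unfolding F_sol_def by (rule the1_equality[of ?P, OF _ s])
qed

definition F_val :: "('v \<Rightarrow> 'x set) \<Rightarrow> ('v \<Rightarrow> 'v set) \<Rightarrow> ('u, 'v, 'x) scm \<Rightarrow> 'u
                     \<Rightarrow> ('v \<times> ('v \<Rightarrow> 'x) \<Rightarrow> 'x)" where
  "F_val D pa S u = (\<lambda>(v, p) \<in> F_index D pa. fn S v u p)"

lemma F_val_in_F_dom: "is_SCM D pa S \<Longrightarrow> F_val D pa S u \<in> F_dom D pa"
  unfolding is_SCM_def F_val_def F_dom_def F_index_def by (auto simp: PiE_iff)

lemma F_val_eq_iff:
  assumes "g \<in> extensional (F_index D pa)"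
  shows "F_val D pa S u = g \<longleftrightarrow> (\<forall>(v, p) \<in> F_index D pa. fn S v u p = g (v, p))"
  using assms extensionalityI[of "F_val D pa S u" "F_index D pa" g]
  by (auto simp: F_val_def)

lemma sol_eq_F_sol:
  assumes S: "is_SCM D pa S" and x: "\<forall>v\<in>dom x. the (x v) \<in> D v"
  shows "sol S x u = F_sol pa (F_val D pa S u) x"
proof (rule F_sol_eqI[OF is_SCM_wf[OF S], symmetric], rule allI)
  fix v
  let ?s = "sol S x u"
  have "restrict ?s (pa v) \<in> PiE (pa v) D"
    using sol_in_D[OF S x] by auto
  then have "F_val D pa S u (v, restrict ?s (pa v)) = fn S v u (restrict ?s (pa v))"
    by (simp add: F_val_def F_index_def)
  also have "\<dots> = fn S v u ?s"
    using S unfolding is_SCM_def by (metis restrict_apply')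
  finally show "?s v = (case x v of Some c \<Rightarrow> c | None \<Rightarrow> F_val D pa S u (v, restrict ?s (pa v)))"
    using sol_unfold[OF S, of x u v] by (simp split: option.split)
qed

lemma finite_F_index:
  fixes D :: "'v::finite \<Rightarrow> 'x set"
  assumes "\<And>v. finite (D v)"
  shows "finite (F_index D pa)"
proof -
  have "F_index D pa = Sigma UNIV (\<lambda>v. PiE (pa v) D)"
    unfolding F_index_def by auto
  then show ?thesis using assms by (simp add: finite_PiE)
qed

lemma finite_F_dom:
  fixes D :: "'v::finite \<Rightarrow> 'x set"
  assumes "\<And>v. finite (D v)"
  shows "finite (F_dom D pa)"
  unfolding F_dom_def using finite_F_index[OF assms] assms
  by (intro finite_PiE) auto

lemma F_prob_eq_measure_fibre:
  assumes S: "is_SCM D pa S" and g: "g \<in> F_dom D pa"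
  shows "F_prob D pa S g = measure (exo S) {u \<in> space (exo S). F_val D pa S u = g}"
proof -
  have "g \<in> extensional (F_index D pa)"
    using g unfolding F_dom_def by (simp add: PiE_iff)
  then show ?thesis
    unfolding F_prob_def by (simp add: F_val_eq_iff sol_par_interv[OF S])
qed

lemma fibre_F_val_sets:
  fixes D :: "'v::finite \<Rightarrow> 'x set"
  assumes fin: "\<And>v. finite (D v)" and S: "is_SCM D pa S" and g: "g \<in> F_dom D pa"
  shows "{u \<in> space (exo S). F_val D pa S u = g} \<in> sets (exo S)"
proof -
  have "g \<in> extensional (F_index D pa)"
    using g unfolding F_dom_def by (simp add: PiE_iff)
  then have fibre: "{u \<in> space (exo S). F_val D pa S u = g}
      = {u \<in> space (exo S). \<forall>(v, p) \<in> F_index D pa. fn S v u p = g (v, p)}"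
    by (simp add: F_val_eq_iff)
  have component_sets: "{u \<in> space (exo S). fn S v u p = g (v, p)} \<in> sets (exo S)"
    if "(v, p) \<in> F_index D pa" for v p
  proof -
    have "(\<lambda>u. fn S v u p) \<in> measurable (exo S) (count_space UNIV)"
      using that S unfolding F_index_def is_SCM_def by (auto simp: PiE_iff)
    from measurable_sets[OF this, of "{g (v, p)}"] show ?thesis
      by (simp add: vimage_def Int_def conj_commute)
  qed
  show ?thesis
    unfolding fibre
    by (intro sets.sets_Collect_finite_All finite_F_index[of D pa, OF fin]) (auto intro: component_sets)
qed

definition query_holds :: "('v \<Rightarrow> 'v set) \<Rightarrow> ('v, 'x) cf_query \<Rightarrow> ('v \<times> ('v \<Rightarrow> 'x) \<Rightarrow> 'x) \<Rightarrow> bool" where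
  "query_holds pa q g \<longleftrightarrow> (\<forall>(x, y) \<in> set q. \<forall>v \<in> dom y. F_sol pa g x v = the (y v))"

lemma cf_prob_eq_sum_F_prob:
  fixes D :: "'v::finite \<Rightarrow> 'x set"
  assumes fin: "\<And>v. finite (D v)" and S: "is_SCM D pa S" and q: "valid_query D q"
  shows "cf_prob S q = (\<Sum>g \<in> {g \<in> F_dom D pa. query_holds pa q g}. F_prob D pa S g)"
proof -
  interpret prob_space "exo S" using S unfolding is_SCM_def by blast
  let ?fibre = "\<lambda>g. {u \<in> space (exo S). F_val D pa S u = g}"
  let ?G = "{g \<in> F_dom D pa. query_holds pa q g}"
  have "(\<forall>(x, y) \<in> set q. \<forall>v \<in> dom y. sol S x u v = the (y v))
        \<longleftrightarrow> query_holds pa q (F_val D pa S u)" for u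
  proof -
    have "sol S x u = F_sol pa (F_val D pa S u) x" if "(x, y) \<in> set q" for x y
      using q that unfolding valid_query_def by (intro sol_eq_F_sol[OF S]) fastforce
    then show ?thesis
      unfolding query_holds_def by (intro ball_cong refl) (auto simp: dom_def)
  qed
  then have "{u \<in> space (exo S). \<forall>(x, y) \<in> set q. \<forall>v \<in> dom y. sol S x u v = the (y v)}
      = (\<Union>g \<in> ?G. ?fibre g)"
    using F_val_in_F_dom[OF S] by auto
  then have "cf_prob S q = prob (\<Union>g \<in> ?G. ?fibre g)"
    unfolding cf_prob_def by simp
  also have "\<dots> = (\<Sum>g \<in> ?G. prob (?fibre g))"
    using finite_F_dom[of D pa, OF fin] fibre_F_val_sets[OF fin S]
    by (intro finite_measure_finite_Union) (auto simp: disjoint_family_on_def)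
  also have "\<dots> = (\<Sum>g \<in> ?G. F_prob D pa S g)"
    using F_prob_eq_measure_fibre[OF S] by simp
  finally show ?thesis .
qed

definition F_query :: "('v \<Rightarrow> 'v set) \<Rightarrow> ('v \<times> ('v \<Rightarrow> 'x) \<Rightarrow> 'x) \<Rightarrow> ('v \<times> ('v \<Rightarrow> 'x)) list
                       \<Rightarrow> ('v, 'x) cf_query" where
  "F_query pa f xs = map (\<lambda>(v, p). (par_interv pa v p, [v \<mapsto> f (v, p)])) xs"

lemma F_prob_eq_cf_prob_F_query:
  assumes "set xs = F_index D pa"
  shows "F_prob D pa S f = cf_prob S (F_query pa f xs)"
proof -
  have "{u \<in> space (exo S). \<forall>(v, p) \<in> F_index D pa. sol S (par_interv pa v p) u v = f (v, p)}
      = {u \<in> space (exo S). \<forall>(x, y) \<in> set (F_query pa f xs). \<forall>v \<in> dom y. sol S x u v = the (y v)}"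
    unfolding F_query_def assms[symmetric] by (auto split: if_splits)
  then show ?thesis
    unfolding F_prob_def cf_prob_def by simp
qed

lemma valid_F_query:
  assumes "set xs = F_index D pa" and "f \<in> F_dom D pa"
  shows "valid_query D (F_query pa f xs)"
  using assms unfolding valid_query_def F_query_def F_dom_def F_index_def par_interv_def
  by (auto simp: PiE_iff split: if_splits)

theorem lemma2:
  fixes D :: "'v::finite \<Rightarrow> 'x set"
    and pa :: "'v \<Rightarrow> 'v set"
    and M :: "('u, 'v, 'x) scm"
    and M' :: "('u', 'v, 'x) scm"
  assumes "\<And>v. finite (D v)"
    and "\<And>v. D v \<noteq> {}"
    and "is_SCM D pa M"
    and "is_SCM D pa M'"
  shows "(\<forall>f \<in> F_dom D pa. F_prob D pa M f = F_prob D pa M' f) \<longleftrightarrow> L3 D M = L3 D M'"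
proof
  assume "\<forall>f \<in> F_dom D pa. F_prob D pa M f = F_prob D pa M' f"
  then have "cf_prob M q = cf_prob M' q" if "valid_query D q" for q
    using cf_prob_eq_sum_F_prob[OF assms(1,3) that] cf_prob_eq_sum_F_prob[OF assms(1,4) that]
    by simp
  then show "L3 D M = L3 D M'"
    unfolding L3_def by fastforce
next
  assume L3_eq: "L3 D M = L3 D M'"
  show "\<forall>f \<in> F_dom D pa. F_prob D pa M f = F_prob D pa M' f"
  proof
    fix f assume f: "f \<in> F_dom D pa"
    obtain xs where xs: "set xs = F_index D pa"
      using finite_list[OF finite_F_index[of D pa, OF assms(1)]] by blast
    have "(F_query pa f xs, cf_prob M (F_query pa f xs)) \<in> L3 D M'"
      using L3_eq valid_F_query[OF xs f] unfolding L3_def by auto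
    then show "F_prob D pa M f = F_prob D pa M' f"
      unfolding L3_def F_prob_eq_cf_prob_F_query[OF xs] by auto
  qed
qed

end
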